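(* For every $1$-Sperner hypergraph ${\cal H}=(V,{\cal E})$ with ${\cal E}\neq\emptyset$ and ${\cal E}\neq\{\emptyset\}$, there exists a vector $x\in\mathbb{R}^V_{+}$ (nonnegative entries) such that $A^{\cal H}x=\mathbf{1}$ and $\mathbf{1}^\top x\ge1$.
   Context: A hypergraph ${\cal H}=(V,{\cal E})$ consists of a finite vertex set $V$ and a set ${\cal E}$ of subsets of $V$. It is $1$-Sperner if every two distinct hyperedges $e,f$ satisfy $\min\{|e\setminus f|,|f\setminus e|\}=1$. The incidence matrix $A^{\cal H}\in\{0,1\}^{{\cal E}\times V}$ has rows indexed by hyperedges and columns by vertices, with entry $1$ at $(e,v)$ iff $v\in e$. $\mathbf{1}$ denotes the all-ones vector of appropriate dimension. *)

theory Defs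
  imports Complex_Main
begin

definition hypergraph :: "'a set \<Rightarrow> 'a set set \<Rightarrow> bool" where
  "hypergraph V E \<longleftrightarrow> finite V \<and> (\<forall>e\<in>E. e \<subseteq> V)"

definition one_sperner :: "'a set set \<Rightarrow> bool" where
  "one_sperner E \<longleftrightarrow>
     (\<forall>e\<in>E. \<forall>f\<in>E. e \<noteq> f \<longrightarrow> min (card (e - f)) (card (f - e)) = 1)"

definition incidence :: "'a set \<Rightarrow> 'a \<Rightarrow> real" where
  "incidence e v = (if v \<in> e then 1 else 0)"

end

theory Submission
  imports Defs
begin

text \<open>
  A 1-Sperner hypergraph has a pivot, a vertex z such that every edge through z, with z removed, lies
  in every edge avoiding z. Removing z from the edges through z (the link of z) gives a 1-Sperner
  hypergraph on fewer vertices; by induction it has a nonnegative weighting with weight 1 on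
  every edge. Scaling it by 1/s, where s is its total weight (at least 1), and giving z the
  weight 1 - 1/s yields weight 1 on the edges through z, and also on the edges avoiding z,
  which contain all vertices of positive weight except z. If {z} is itself an edge, z gets
  weight 1 and the edges avoiding z are weighted by induction instead.

  A pivot z is found in an edge e0 of minimum size: unless some vertex of e0 lies in every edge,
  take z \<in> e0 maximising the least number of vertices outside e0 of an edge avoiding z.
\<close>

definition pivot :: "'a set set \<Rightarrow> 'a \<Rightarrow> bool" where
  "pivot E z \<longleftrightarrow> (\<forall>e\<in>E. \<forall>f\<in>E. z \<in> e \<longrightarrow> z \<notin> f \<longrightarrow> e - {z} \<subseteq> f)"

definition link :: "'a set set \<Rightarrow> 'a \<Rightarrow> 'a set set" where
  "link E z = (\<lambda>e. e - {z}) ` {e\<in>E. z \<in> e}"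

lemma one_sperner_subset: "one_sperner E \<Longrightarrow> F \<subseteq> E \<Longrightarrow> one_sperner F"
  unfolding one_sperner_def by blast

lemma one_sperner_link:
  assumes "one_sperner E"
  shows "one_sperner (link E z)"
  unfolding one_sperner_def
proof (intro ballI impI)
  fix a b assume "a \<in> link E z" "b \<in> link E z" "a \<noteq> b"
  then obtain e f where ef: "e \<in> E" "f \<in> E" "z \<in> e" "z \<in> f" "a = e - {z}" "b = f - {z}"
    unfolding link_def by blast
  then have "a - b = e - f" "b - a = f - e" "e \<noteq> f" using \<open>a \<noteq> b\<close> by auto
  then show "min (card (a - b)) (card (b - a)) = 1"
    using assms ef(1,2) unfolding one_sperner_def by auto
qed

lemma empty_notin_link:
  assumes "{z} \<notin> E"
  shows "{} \<notin> link E z"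
proof
  assume "{} \<in> link E z"
  then obtain e where "e \<in> E" "z \<in> e" "e - {z} = {}" unfolding link_def by blast
  then have "e = {z}" "e \<in> E" by auto
  then show False using assms by simp
qed

lemma one_sperner_antichain:
  assumes "one_sperner E" "e \<in> E" "f \<in> E" "e \<subseteq> f"
  shows "e = f"
proof -
  have "min (card (e - f)) (card (f - e)) \<noteq> 1" using assms(4) by (simp add: Diff_eq_empty_iff[THEN iffD2])
  then show ?thesis using assms(1-3) unfolding one_sperner_def by blast
qed

lemma one_sperner_diff_singleton:
  assumes "one_sperner E" "e \<in> E" "f \<in> E" "e \<noteq> f"
  shows "(\<exists>u. e - f = {u}) \<or> (\<exists>u. f - e = {u})"
proof -
  have "min (card (e - f)) (card (f - e)) = 1"
    using assms unfolding one_sperner_def by blast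
  then have "card (e - f) = 1 \<or> card (f - e) = 1" by (simp add: min_def split: if_splits)
  then show ?thesis by (simp add: card_1_singleton_iff)
qed

lemma one_sperner_diff_singleton_of_card_le:
  assumes "one_sperner E" "e \<in> E" "f \<in> E" "e \<noteq> f" "finite e" "finite f" "card e \<le> card f"
  shows "\<exists>u. e - f = {u}"
proof -
  have "card (e - f) \<le> card (f - e)"
    using assms(5-7) by (rule card_le_sym_Diff)
  moreover have "min (card (e - f)) (card (f - e)) = 1"
    using assms(1-4) unfolding one_sperner_def by blast
  ultimately show ?thesis
    by (simp add: min_def card_1_singleton_iff split: if_splits)
qed

lemma one_sperner_min_card_diff:
  assumes sp: "one_sperner E" and fin: "\<forall>e\<in>E. finite e"
    and e0: "e0 \<in> E" "\<forall>f\<in>E. card e0 \<le> card f"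
    and h: "h \<in> E" and v: "v \<in> e0" "v \<notin> h"
  shows "e0 - h = {v}"
proof -
  have "h \<noteq> e0" using v by auto
  then obtain u where "e0 - h = {u}"
    using one_sperner_diff_singleton_of_card_le[OF sp e0(1) h] e0 h fin by auto
  then show ?thesis using v by auto
qed

lemma one_sperner_exchange:
  assumes sp: "one_sperner E" and fin: "\<forall>e\<in>E. finite e"
    and e0: "e0 \<in> E" "\<forall>f\<in>E. card e0 \<le> card f"
    and f: "f \<in> E" "z \<notin> f" and g: "g \<in> E" "y \<notin> g"
    and yz: "y \<in> e0" "z \<in> e0" "y \<noteq> z"
    and card_le: "card (g - e0) \<le> card (f - e0)"
  shows "g - e0 \<subseteq> f - e0"
proof -
  have "e0 - f = {z}" using one_sperner_min_card_diff[OF sp fin e0 f(1) yz(2) f(2)] .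
  moreover have "e0 - g = {y}" using one_sperner_min_card_diff[OF sp fin e0 g(1) yz(1) g(2)] .
  ultimately have zg: "z \<in> g - f" and yf: "y \<in> f - g" using yz by auto
  then have "g \<noteq> f" by blast
  then consider u where "g - f = {u}" | u where "f - g = {u}"
    using one_sperner_diff_singleton[OF sp g(1) f(1)] by blast
  then show ?thesis
  proof cases
    case 1
    then have "g - f = {z}" using zg by auto
    then show ?thesis using yz(2) by auto
  next
    case 2
    then have sub: "f - e0 \<subseteq> g - e0" using yf yz by auto
    have fin_g: "finite (g - e0)" using fin g by auto
    have "card (f - e0) = card (g - e0)" using card_mono[OF fin_g sub] card_le by simp
    then show ?thesis using card_subset_eq[OF fin_g sub] by simp
  qed
qed

definition min_excess :: "'a set set \<Rightarrow> 'a set \<Rightarrow> 'a \<Rightarrow> nat" where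
  "min_excess E e0 y = Min ((\<lambda>g. card (g - e0)) ` {g\<in>E. y \<notin> g})"

lemma min_excess_le:
  assumes "finite E" "f \<in> E" "y \<notin> f"
  shows "min_excess E e0 y \<le> card (f - e0)"
  unfolding min_excess_def using assms by (intro Min_le) auto

lemma min_excess_attained:
  assumes "finite E" "\<exists>g\<in>E. y \<notin> g"
  shows "\<exists>g\<in>E. y \<notin> g \<and> min_excess E e0 y = card (g - e0)"
proof -
  have "min_excess E e0 y \<in> (\<lambda>g. card (g - e0)) ` {g\<in>E. y \<notin> g}"
    unfolding min_excess_def using assms by (intro Min_in) auto
  then show ?thesis by auto
qed

lemma pivot_of_maximal_min_excess:
  assumes sp: "one_sperner E" and finE: "finite E" and fin: "\<forall>e\<in>E. finite e"
    and e0: "e0 \<in> E" "\<forall>f\<in>E. card e0 \<le> card f"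
    and avoid: "\<forall>y\<in>e0. \<exists>g\<in>E. y \<notin> g"
    and z: "z \<in> e0" "\<forall>y\<in>e0. min_excess E e0 y \<le> min_excess E e0 z"
  shows "pivot E z"
  unfolding pivot_def
proof (intro ballI impI)
  fix e f assume e: "e \<in> E" "z \<in> e" and f: "f \<in> E" "z \<notin> f"
  show "e - {z} \<subseteq> f"
  proof (rule ccontr)
    assume "\<not> e - {z} \<subseteq> f"
    then obtain w where w: "w \<in> e" "w \<notin> f" "w \<noteq> z" by blast
    have "e0 - f = {z}" using one_sperner_min_card_diff[OF sp fin e0 f(1) z(1) f(2)] .
    then have "e0 \<noteq> e" using w by auto
    moreover have "finite e0" "finite e" "card e0 \<le> card e" using fin e0 e(1) by auto
    ultimately obtain y where y: "e0 - e = {y}"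
      using one_sperner_diff_singleton_of_card_le[OF sp e0(1) e(1)] by blast
    have "y \<in> e0" "y \<notin> e" using y by auto
    then have "y \<noteq> z" using e(2) by blast
    then have "y \<in> f - e" using \<open>y \<in> e0\<close> \<open>y \<notin> e\<close> \<open>e0 - f = {z}\<close> by blast
    have "z \<in> e - f" "w \<in> e - f" using e(2) f(2) w by auto
    then have "e \<noteq> f" and "\<And>u. e - f \<noteq> {u}" using w(3) by (blast, metis singletonD)
    then obtain u where "f - e = {u}" using one_sperner_diff_singleton[OF sp e(1) f(1)] by blast
    then have "f - e = {y}" using \<open>y \<in> f - e\<close> by auto
    then have "f - e0 \<subseteq> e - e0" using \<open>y \<in> e0\<close> by auto
    moreover have "w \<in> (e - e0) - (f - e0)" using w \<open>e0 - f = {z}\<close> by blast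
    ultimately have "f - e0 \<subset> e - e0" by blast
    moreover have "finite (e - e0)" using fin e(1) by blast
    ultimately have f_lt_e: "card (f - e0) < card (e - e0)" by (simp add: psubset_card_mono)
    obtain g where g: "g \<in> E" "y \<notin> g" "min_excess E e0 y = card (g - e0)"
      using min_excess_attained[OF finE bspec[OF avoid \<open>y \<in> e0\<close>]] by blast
    have "min_excess E e0 y \<le> min_excess E e0 z" using z(2) \<open>y \<in> e0\<close> by blast
    then have g_le_f: "card (g - e0) \<le> card (f - e0)"
      using g(3) min_excess_le[OF finE f, of e0] by linarith
    have "g - e0 \<subseteq> f - e0"
      by (rule one_sperner_exchange[OF sp fin e0 f g(1,2) \<open>y \<in> e0\<close> z(1) \<open>y \<noteq> z\<close> g_le_f])
    then have "g \<subseteq> e" using \<open>f - e0 \<subset> e - e0\<close> y g(2) by auto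
    then have "g = e" using one_sperner_antichain[OF sp g(1) e(1)] by blast
    then show False using g_le_f f_lt_e by simp
  qed
qed

lemma one_sperner_pivot_exists:
  assumes fin: "finite (\<Union>E)" and sp: "one_sperner E" and ne: "E \<noteq> {}" and nemp: "{} \<notin> E"
  shows "\<exists>z\<in>\<Union>E. pivot E z"
proof -
  have finE: "finite E" using fin by (rule finite_UnionD)
  have fin_edges: "\<forall>e\<in>E. finite e" using fin by (meson Union_upper finite_subset)
  obtain e0 where e0: "e0 \<in> E" "\<forall>f\<in>E. card e0 \<le> card f"
    using ne ex_has_least_nat[of "\<lambda>e. e \<in> E" _ card] by blast
  have fin_e0: "finite e0" and "e0 \<noteq> {}" using e0 fin_edges nemp by auto
  show ?thesis
  proof (cases "\<exists>z\<in>e0. \<forall>f\<in>E. z \<in> f")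
    case True
    then show ?thesis using e0 unfolding pivot_def by blast
  next
    case False
    then have avoid: "\<forall>y\<in>e0. \<exists>g\<in>E. y \<notin> g" by blast
    obtain z where z: "z \<in> e0" "\<forall>y\<in>e0. min_excess E e0 y \<le> min_excess E e0 z"
      using Max_in[of "min_excess E e0 ` e0"] Max_ge[of "min_excess E e0 ` e0"] fin_e0 \<open>e0 \<noteq> {}\<close>
      by fastforce
    then have "pivot E z" by (rule pivot_of_maximal_min_excess[OF sp finE fin_edges e0 avoid])
    then show ?thesis using z(1) e0(1) by blast
  qed
qed

lemma pivot_weighting_of_link:
  fixes x1 :: "'a \<Rightarrow> real"
  assumes fin: "finite (\<Union>E)" and piv: "pivot E z" and z: "z \<in> \<Union>E"
    and x1_nonneg: "\<forall>v. 0 \<le> x1 v" and x1_link: "\<forall>e\<in>link E z. sum x1 e = 1"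
  shows "\<exists>x :: 'a \<Rightarrow> real. (\<forall>v. 0 \<le> x v) \<and> (\<forall>e\<in>E. sum x e = 1)"
proof -
  define U where "U = \<Union>(link E z)"
  define s where "s = sum x1 U"
  have fin_U: "finite U" and z_U: "z \<notin> U"
    unfolding U_def link_def using fin by (auto intro: finite_subset)
  have link_sub_U: "e - {z} \<subseteq> U" and link_sum: "sum x1 (e - {z}) = 1" if "e \<in> E" "z \<in> e" for e
    using that x1_link unfolding U_def link_def by auto
  have U_sub: "U \<subseteq> f" if "f \<in> E" "z \<notin> f" for f
    using piv that unfolding pivot_def U_def link_def by blast
  obtain e1 where e1: "e1 \<in> E" "z \<in> e1" using z by blast
  have "sum x1 (e1 - {z}) \<le> s"
    unfolding s_def using fin_U x1_nonneg link_sub_U[OF e1] by (intro sum_mono2) auto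
  then have s_ge: "1 \<le> s" using link_sum[OF e1] by simp
  define x where "x = (\<lambda>v. if v \<in> U then x1 v / s else 0)(z := 1 - 1 / s)"
  have sum_x_U: "sum x A = sum x1 A / s" if "A \<subseteq> U" for A
  proof -
    have "sum x A = (\<Sum>v\<in>A. x1 v / s)" using that z_U by (intro sum.cong) (auto simp: x_def)
    then show ?thesis by (simp add: sum_divide_distrib)
  qed
  have "sum x e = 1" if e: "e \<in> E" for e
  proof (cases "z \<in> e")
    case True
    have "finite e" using fin e by (meson Union_upper finite_subset)
    then have "sum x e = x z + sum x (e - {z})" using True by (rule sum.remove)
    then show ?thesis using sum_x_U[OF link_sub_U[OF e True]] link_sum[OF e True] by (simp add: x_def)
  next
    case False
    have "finite e" using fin e by (meson Union_upper finite_subset)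
    then have "sum x e = sum x U"
      using U_sub[OF e False] False by (intro sum.mono_neutral_right) (auto simp: x_def)
    then show ?thesis using sum_x_U[of U] s_ge by (simp add: s_def)
  qed
  moreover have "\<forall>v. 0 \<le> x v" using s_ge x1_nonneg by (simp add: x_def)
  ultimately show ?thesis by blast
qed

lemma singleton_weighting_of_deletion:
  fixes x :: "'a \<Rightarrow> real"
  assumes sp: "one_sperner E" and z: "{z} \<in> E"
    and x_nonneg: "\<forall>v. 0 \<le> x v" and x_del: "\<forall>f\<in>{f\<in>E. z \<notin> f}. sum x f = 1"
  shows "\<exists>x :: 'a \<Rightarrow> real. (\<forall>v. 0 \<le> x v) \<and> (\<forall>e\<in>E. sum x e = 1)"
proof -
  have "sum (x(z := 1)) e = 1" if e: "e \<in> E" for e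
  proof (cases "z \<in> e")
    case True
    then have "e = {z}" using one_sperner_antichain[OF sp z e] by blast
    then show ?thesis by simp
  next
    case False
    then have "sum (x(z := 1)) e = sum x e" by (intro sum.cong) auto
    then show ?thesis using x_del e False by simp
  qed
  moreover have "\<forall>v. 0 \<le> (x(z := 1)) v" using x_nonneg by simp
  ultimately show ?thesis by blast
qed

theorem one_sperner_exact_weighting:
  assumes "finite (\<Union>E)" "one_sperner E" "{} \<notin> E"
  shows "\<exists>x :: 'a \<Rightarrow> real. (\<forall>v. 0 \<le> x v) \<and> (\<forall>e\<in>E. sum x e = 1)"
  using assms
proof (induction "card (\<Union>E)" arbitrary: E rule: less_induct)
  case less
  note fin = less.prems(1) and sp = less.prems(2) and nemp = less.prems(3)
  show ?case
  proof (cases "E = {}")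
    case True
    then show ?thesis by auto
  next
    case False
    obtain z where z: "z \<in> \<Union>E" "pivot E z"
      using one_sperner_pivot_exists[OF fin sp False nemp] by blast
    have IH: "\<exists>x :: 'a \<Rightarrow> real. (\<forall>v. 0 \<le> x v) \<and> (\<forall>e\<in>F. sum x e = 1)"
      if F: "\<Union>F \<subseteq> \<Union>E - {z}" "one_sperner F" "{} \<notin> F" for F
    proof (rule less.hyps)
      have "\<Union>F \<subset> \<Union>E" using F(1) z(1) by blast
      then show "card (\<Union>F) < card (\<Union>E)" by (rule psubset_card_mono[OF fin])
      show "finite (\<Union>F)" using F(1) fin by (blast intro: finite_subset)
    qed (fact F(2,3))+
    show ?thesis
    proof (cases "{z} \<in> E")
      case True
      have "\<Union>{f\<in>E. z \<notin> f} \<subseteq> \<Union>E - {z}" by blast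
      moreover have "one_sperner {f\<in>E. z \<notin> f}" by (rule one_sperner_subset[OF sp]) blast
      moreover have "{} \<notin> {f\<in>E. z \<notin> f}" using nemp by blast
      ultimately have "\<exists>x :: 'a \<Rightarrow> real. (\<forall>v. 0 \<le> x v) \<and> (\<forall>f\<in>{f\<in>E. z \<notin> f}. sum x f = 1)"
        by (rule IH)
      then show ?thesis using singleton_weighting_of_deletion[OF sp True] by blast
    next
      case False
      have "\<Union>(link E z) \<subseteq> \<Union>E - {z}" unfolding link_def by blast
      moreover have "one_sperner (link E z)" using sp by (rule one_sperner_link)
      moreover have "{} \<notin> link E z" using False by (rule empty_notin_link)
      ultimately have "\<exists>x1 :: 'a \<Rightarrow> real. (\<forall>v. 0 \<le> x1 v) \<and> (\<forall>e\<in>link E z. sum x1 e = 1)"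
        by (rule IH)
      then show ?thesis using pivot_weighting_of_link[OF fin z(2,1)] by blast
    qed
  qed
qed

lemma sum_incidence:
  assumes "finite V" "e \<subseteq> V"
  shows "(\<Sum>v\<in>V. incidence e v * x v) = sum x e"
proof -
  have "(\<Sum>v\<in>V. incidence e v * x v) = (\<Sum>v\<in>V. if v \<in> e then x v else 0)"
    by (intro sum.cong) (auto simp: incidence_def)
  also have "\<dots> = sum x (V \<inter> e)" using assms(1) by (rule sum.inter_restrict[symmetric])
  also have "V \<inter> e = e" using assms(2) by blast
  finally show ?thesis .
qed

theorem lemma13:
  fixes V :: "'a set" and E :: "'a set set"
  assumes "hypergraph V E"
    and "one_sperner E"
    and "E \<noteq> {}"
    and "E \<noteq> {{}}"
  shows "\<exists>x :: 'a \<Rightarrow> real.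
           (\<forall>v\<in>V. x v \<ge> 0)
         \<and> (\<forall>e\<in>E. (\<Sum>v\<in>V. incidence e v * x v) = 1)
         \<and> (\<Sum>v\<in>V. x v) \<ge> 1"
proof -
  have fin: "finite V" and sub: "\<forall>e\<in>E. e \<subseteq> V" using assms(1) by (auto simp: hypergraph_def)
  have "{} \<notin> E" using one_sperner_antichain[OF assms(2)] assms(3,4) by blast
  moreover have "finite (\<Union>E)" using fin sub by (meson Union_least finite_subset)
  ultimately obtain x :: "'a \<Rightarrow> real" where x: "\<forall>v. 0 \<le> x v" "\<forall>e\<in>E. sum x e = 1"
    using one_sperner_exact_weighting[OF _ assms(2)] by blast
  obtain e where e: "e \<in> E" using assms(3) by blast
  have "sum x e \<le> sum x V" using e sub fin x(1) by (intro sum_mono2) auto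
  then have "1 \<le> sum x V" using x(2) e by simp
  then show ?thesis using x sum_incidence[OF fin] sub by (intro exI[of _ x]) auto
qed

end
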